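(* In the odd setting below, assume $N_k$ is invertible and let $c_k^0,\dots,c_k^{2s}$ be the $n\times n$ blocks of the unique $mn\times n$ matrix $C_k=(c_k^0;\dots;c_k^{2s})$ with $N_kC_k=F^{(k)}_{2s+1}$. Then each $c_k^i$ is homogeneous with respect to the scaling, with $\deg c_k^{2\ell}=\ell/s$ ($\ell=0,\dots,s$) and $\deg c_k^{2\ell+1}=-1+\ell/s$ ($\ell=0,\dots,s-1$); that is, $c_k^i$ has the same degree as $a_k^i$.
   Context: Odd setting: integers $n\ge1$, $s\ge1$, $m=2s+1$; $a_k^0,\dots,a_k^{2s}$ are $n\times n$ matrices with indeterminate entries, $N$-periodic in $k$. $Q_k$ is the $mn\times mn$ block matrix with $I_n$ in blocks $(i+1,i)$, last block column $(a_k^0;\dots;a_k^{2s})$, $O_n$ elsewhere. $r_k=(a_k^0;O_n;a_k^2;O_n;\dots;O_n;a_k^{2s})$. $F^{(k)}_0=r_k$, $F^{(k)}_\ell=Q_k\cdots Q_{k+\ell-1}r_{k+\ell}$, $N_k=(F^{(k)}_0,\dots,F^{(k)}_{2s})$. The scaling, for $\mu>0$: $a^{2r+1}\mapsto\mu^{-1+r/s}a^{2r+1}$ ($r=0,\dots,s-1$), $a^{2r}\mapsto\mu^{r/s}a^{2r}$ ($r=0,\dots,s$), applied for every index $k$; a rational function is homogeneous of degree $d$ if the scaling multiplies it by $\mu^d$, and a matrix is homogeneous of degree $d$ if all its entries are. *)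

theory Defs
  imports "Jordan_Normal_Form.Determinant"
begin

text \<open>Coefficient data: a k i is the n x n matrix a_k^i (i = 0..2s), for k a natural index.
  Indeterminates are modelled by arbitrary real values of the entries.\<close>

definition Qmat :: "nat \<Rightarrow> nat \<Rightarrow> (nat \<Rightarrow> nat \<Rightarrow> real mat) \<Rightarrow> nat \<Rightarrow> real mat" where
  "Qmat n s a k = mat ((2*s+1)*n) ((2*s+1)*n) (\<lambda>(i,j).
     if j div n = 2*s then a k (i div n) $$ (i mod n, j mod n)
     else if i div n = j div n + 1 \<and> i mod n = j mod n then 1 else 0)"

definition rmat :: "nat \<Rightarrow> nat \<Rightarrow> (nat \<Rightarrow> nat \<Rightarrow> real mat) \<Rightarrow> nat \<Rightarrow> real mat" where
  "rmat n s a k = mat ((2*s+1)*n) n (\<lambda>(i,j).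
     if even (i div n) then a k (i div n) $$ (i mod n, j) else 0)"

fun Qprod :: "nat \<Rightarrow> nat \<Rightarrow> (nat \<Rightarrow> nat \<Rightarrow> real mat) \<Rightarrow> nat \<Rightarrow> nat \<Rightarrow> real mat" where
  "Qprod n s a k 0 = 1\<^sub>m ((2*s+1)*n)"
| "Qprod n s a k (Suc l) = Qprod n s a k l * Qmat n s a (k + l)"

definition Fmat :: "nat \<Rightarrow> nat \<Rightarrow> (nat \<Rightarrow> nat \<Rightarrow> real mat) \<Rightarrow> nat \<Rightarrow> nat \<Rightarrow> real mat" where
  "Fmat n s a k l = Qprod n s a k l * rmat n s a (k + l)"

definition Nmat :: "nat \<Rightarrow> nat \<Rightarrow> (nat \<Rightarrow> nat \<Rightarrow> real mat) \<Rightarrow> nat \<Rightarrow> real mat" where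
  "Nmat n s a k = mat ((2*s+1)*n) ((2*s+1)*n) (\<lambda>(i,j). Fmat n s a k (j div n) $$ (i, j mod n))"

definition Cmat :: "nat \<Rightarrow> nat \<Rightarrow> (nat \<Rightarrow> nat \<Rightarrow> real mat) \<Rightarrow> nat \<Rightarrow> real mat" where
  "Cmat n s a k = (THE C. C \<in> carrier_mat ((2*s+1)*n) n \<and> Nmat n s a k * C = Fmat n s a k (2*s+1))"

definition cblock :: "nat \<Rightarrow> nat \<Rightarrow> (nat \<Rightarrow> nat \<Rightarrow> real mat) \<Rightarrow> nat \<Rightarrow> nat \<Rightarrow> real mat" where
  "cblock n s a k i = mat n n (\<lambda>(p,q). Cmat n s a k $$ (i*n + p, q))"

definition sdeg :: "nat \<Rightarrow> nat \<Rightarrow> real" where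
  "sdeg s i = (if even i then real (i div 2) / real s else -1 + real (i div 2) / real s)"

definition scale :: "nat \<Rightarrow> real \<Rightarrow> (nat \<Rightarrow> nat \<Rightarrow> real mat) \<Rightarrow> (nat \<Rightarrow> nat \<Rightarrow> real mat)" where
  "scale s \<mu> a = (\<lambda>k i. (\<mu> powr sdeg s i) \<cdot>\<^sub>m a k i)"

end

theory Submission
  imports Defs
begin

text \<open>
  Put e_j = c_k^j for j \<le> 2s and e_{2s+1} = -I; the defining equation of C_k then reads
  \<Sum>_j F_j e_j = 0. Evaluating this sum by the Horner scheme T_l = r_{k+l} e_l + Q_{k+l} T_{l+1}
  gives tail sums with T_0 = 0. The blocks of T_l whose index has the parity of l are
  themselves the tail sums of another input; since N_k is invertible, that input and hence
  these blocks vanish. On the remaining blocks the recursion is homogeneous, block i of T_l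
  having degree deg a^i + deg a^l. So scaling the a^j and the e_j by their degrees keeps
  T_0 = 0, and uniqueness of C_k gives the claim.

  For the invertibility of the scaled N_k, let D multiply block b by \<mu>^(b/2s). Then
  D Q_k X = \<mu>^(1/2s) Q'_k D X + (1 - \<mu>^(1+1/2s)) r'_k X_{2s}, where X_{2s} is the last
  block of X, so every left null vector U of the scaled N_k gives the left null vector U D of N_k.
\<close>

section \<open>Block matrices\<close>

lemma block_index_less: "b < m \<Longrightarrow> p < n \<Longrightarrow> b * n + p < m * (n::nat)"
proof -
  assume "b < m" "p < n"
  then have "b * n + p < (b + 1) * n" by simp
  also have "\<dots> \<le> m * n" using \<open>b < m\<close> by (intro mult_right_mono) auto
  finally show ?thesis .
qed

lemma eq_block_index_iff:
  assumes "p < n"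
  shows "j = b * n + p \<longleftrightarrow> j div n = b \<and> j mod (n::nat) = p"
proof
  assume "j = b * n + p"
  with assms show "j div n = b \<and> j mod n = p" by simp
next
  assume "j div n = b \<and> j mod n = p"
  then show "j = b * n + p" using div_mult_mod_eq[of j n] by simp
qed

lemma sum_lessThan_mult_split:
  "(\<Sum>j<m*n. f j) = (\<Sum>b<m. \<Sum>p<n. f (b*n+p))" for m n :: nat and f :: "nat \<Rightarrow> 'a :: comm_monoid_add"
proof -
  have "(\<Sum>j\<in>{b*n..<b*n+n}. f j) = (\<Sum>p<n. f (b*n+p))" for b
    by (rule sum.reindex_bij_witness[of _ "\<lambda>p. b*n+p" "\<lambda>j. j - b*n"]) auto
  then show ?thesis by (simp add: sum.nat_group[symmetric])
qed

lemma index_mult_mat_sum: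
  assumes "A \<in> carrier_mat r k" "B \<in> carrier_mat k c" "i < r" "j < c"
  shows "(A * B) $$ (i,j) = (\<Sum>l<k. A $$ (i,l) * B $$ (l,j))"
  using assms by (auto simp: scalar_prod_def lessThan_atLeast0 intro!: sum.cong)

lemma one_smult_mat[simp]: "1 \<cdot>\<^sub>m A = (A :: 'a :: monoid_mult mat)"
  by (intro eq_matI) simp_all

lemma smult_smult_mat: "x \<cdot>\<^sub>m (y \<cdot>\<^sub>m A) = (x * y) \<cdot>\<^sub>m (A :: 'a :: semigroup_mult mat)"
  by (intro eq_matI) (simp_all add: mult.assoc)

lemma smult_mult_smult:
  assumes "A \<in> carrier_mat r k" "B \<in> carrier_mat k c"
  shows "(x \<cdot>\<^sub>m A) * (y \<cdot>\<^sub>m B) = (x * y) \<cdot>\<^sub>m (A * (B :: 'a :: comm_ring mat))"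
proof -
  have "(x \<cdot>\<^sub>m A) * (y \<cdot>\<^sub>m B) = x \<cdot>\<^sub>m (A * (y \<cdot>\<^sub>m B))"
    using assms by (intro mult_smult_assoc_mat[of _ r k _ c]) simp_all
  also have "A * (y \<cdot>\<^sub>m B) = y \<cdot>\<^sub>m (A * B)" by (rule mult_smult_distrib[OF assms])
  finally show ?thesis by (simp add: smult_smult_mat)
qed

lemma add_uminus_eq_zero_mat:
  fixes A :: "'a :: ab_group_add mat"
  assumes "A \<in> carrier_mat r c" "B \<in> carrier_mat r c" "A + - B = 0\<^sub>m r c"
  shows "A = B"
proof (rule eq_matI)
  fix i j assume ij: "i < dim_row B" "j < dim_col B"
  have "(A + - B) $$ (i,j) = 0" using assms(2,3) ij by simp
  then show "A $$ (i,j) = B $$ (i,j)" using assms(1,2) ij by simp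
qed (use assms in simp_all)

lemma smult_mat_cancel:
  fixes X :: "'a :: field mat"
  assumes "x \<noteq> 0" "X \<in> carrier_mat r c" "Y \<in> carrier_mat r c" "x \<cdot>\<^sub>m X = x \<cdot>\<^sub>m Y"
  shows "X = Y"
proof (rule eq_matI)
  fix i j assume ij: "i < dim_row Y" "j < dim_col Y"
  have "(x \<cdot>\<^sub>m X) $$ (i,j) = (x \<cdot>\<^sub>m Y) $$ (i,j)" using assms(4) by simp
  then have "x * X $$ (i,j) = x * Y $$ (i,j)" using assms(2,3) ij by simp
  then show "X $$ (i,j) = Y $$ (i,j)" using assms(1) by simp
qed (use assms in simp_all)

lemma det_nonzero_mult_left_cancel:
  fixes A :: "'a :: field mat"
  assumes A: "A \<in> carrier_mat m m" and det: "det A \<noteq> 0"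
    and X: "X \<in> carrier_mat m c" and Y: "Y \<in> carrier_mat m c" and eq: "A * X = A * Y"
  shows "X = Y"
proof -
  have adj: "adj_mat A \<in> carrier_mat m m" "adj_mat A * A = det A \<cdot>\<^sub>m 1\<^sub>m m"
    using adj_mat[OF A] by auto
  have "det A \<cdot>\<^sub>m Z = adj_mat A * (A * Z)" if "Z \<in> carrier_mat m c" for Z
    using that A adj by (simp add: assoc_mult_mat[symmetric] mult_smult_assoc_mat[of _ m m])
  then show ?thesis using X Y eq by (metis smult_mat_cancel[OF det X Y])
qed

lemma det_nonzero_mult_right_cancel:
  fixes A :: "'a :: field mat"
  assumes A: "A \<in> carrier_mat m m" and det: "det A \<noteq> 0"
    and X: "X \<in> carrier_mat r m" and Y: "Y \<in> carrier_mat r m" and eq: "X * A = Y * A"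
  shows "X = Y"
proof -
  have adj: "adj_mat A \<in> carrier_mat m m" "A * adj_mat A = det A \<cdot>\<^sub>m 1\<^sub>m m"
    using adj_mat[OF A] by auto
  have "det A \<cdot>\<^sub>m Z = (Z * A) * adj_mat A" if "Z \<in> carrier_mat r m" for Z
    using that A adj by (simp add: mult_smult_distrib[of _ r m _ m])
  then show ?thesis using X Y eq by (metis smult_mat_cancel[OF det X Y])
qed

lemma det_nonzero_solvable:
  fixes A :: "'a :: field mat"
  assumes A: "A \<in> carrier_mat m m" and det: "det A \<noteq> 0" and B: "B \<in> carrier_mat m c"
  shows "\<exists>X \<in> carrier_mat m c. A * X = B"
proof
  let ?X = "(1 / det A) \<cdot>\<^sub>m (adj_mat A * B)"
  have adj: "adj_mat A \<in> carrier_mat m m" "A * adj_mat A = det A \<cdot>\<^sub>m 1\<^sub>m m"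
    using adj_mat[OF A] by auto
  show "?X \<in> carrier_mat m c" using adj B by simp
  have "A * ?X = (1 / det A) \<cdot>\<^sub>m (A * (adj_mat A * B))"
    by (rule mult_smult_distrib[OF A mult_carrier_mat[OF adj(1) B]])
  also have "A * (adj_mat A * B) = det A \<cdot>\<^sub>m B"
    using adj B by (simp add: assoc_mult_mat[OF A adj(1) B, symmetric] mult_smult_assoc_mat[OF one_carrier_mat B])
  also have "(1 / det A) \<cdot>\<^sub>m (det A \<cdot>\<^sub>m B) = B"
    using det B by (intro eq_matI) auto
  finally show "A * ?X = B" .
qed

lemma det_zero_left_kernel:
  fixes A :: "'a :: idom mat"
  assumes A: "A \<in> carrier_mat m m" and det: "det A = 0"
  obtains U where "U \<in> carrier_mat 1 m" "U \<noteq> 0\<^sub>m 1 m" "U * A = 0\<^sub>m 1 m"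
proof -
  have "det (transpose_mat A) = 0" using det det_transpose[OF A] by simp
  then obtain v where v: "v \<in> carrier_vec m" "v \<noteq> 0\<^sub>v m" "transpose_mat A *\<^sub>v v = 0\<^sub>v m"
    using det_0_iff_vec_prod_zero[of "transpose_mat A" m] A by auto
  show ?thesis
  proof
    show "mat_of_row v \<in> carrier_mat 1 m" using v by simp
    show "mat_of_row v \<noteq> 0\<^sub>m 1 m"
    proof
      assume z: "mat_of_row v = 0\<^sub>m 1 m"
      have "v $ j = 0" if "j < m" for j using arg_cong[OF z, of "\<lambda>M. M $$ (0,j)"] that v(1) by simp
      then have "v = 0\<^sub>v m" using v(1) by (intro eq_vecI) auto
      then show False using v(2) by simp
    qed
    show "mat_of_row v * A = 0\<^sub>m 1 m"
    proof (rule eq_matI)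
      fix i j assume "i < dim_row (0\<^sub>m 1 m :: 'a mat)" "j < dim_col (0\<^sub>m 1 m :: 'a mat)"
      then have "i = 0" "j < m" by auto
      then have "(mat_of_row v * A) $$ (i,j) = (transpose_mat A *\<^sub>v v) $ j"
        using A v(1) by (simp add: comm_scalar_prod[of _ m])
      then show "(mat_of_row v * A) $$ (i,j) = 0\<^sub>m 1 m $$ (i,j)"
        using v(3) \<open>i = 0\<close> \<open>j < m\<close> by simp
    qed (use A v in simp_all)
  qed
qed

definition block_row :: "nat \<Rightarrow> 'a mat \<Rightarrow> nat \<Rightarrow> 'a mat" where
  "block_row n X b = mat n (dim_col X) (\<lambda>(p,q). X $$ (b*n+p, q))"

lemma dim_block_row[simp]: "dim_row (block_row n X b) = n" "dim_col (block_row n X b) = dim_col X"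
  by (simp_all add: block_row_def)

lemma block_row_carrier: "X \<in> carrier_mat r c \<Longrightarrow> block_row n X b \<in> carrier_mat n c"
  by (simp add: block_row_def)

lemma index_block_row[simp]: "p < n \<Longrightarrow> q < dim_col X \<Longrightarrow> block_row n X b $$ (p,q) = X $$ (b*n+p, q)"
  by (simp add: block_row_def)

lemma block_row_mult:
  assumes "A \<in> carrier_mat (m*n) k" "B \<in> carrier_mat k c" "b < m"
  shows "block_row n (A * B) b = block_row n A b * B"
  using assms block_index_less[OF assms(3)] by (intro eq_matI) (auto simp: scalar_prod_def row_def)

lemma block_row_add:
  assumes "A \<in> carrier_mat (m*n) c" "B \<in> carrier_mat (m*n) c" "b < m"
  shows "block_row n (A + B) b = block_row n A b + block_row n B b"
  using assms block_index_less[OF assms(3)] by (intro eq_matI) auto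

lemma block_row_smult:
  assumes "A \<in> carrier_mat (m*n) c" "b < m"
  shows "block_row n (x \<cdot>\<^sub>m A) b = x \<cdot>\<^sub>m block_row n A b"
  using assms block_index_less[OF assms(2)] by (intro eq_matI) auto

lemma block_row_zero: "b < m \<Longrightarrow> block_row n (0\<^sub>m (m*n) c) b = 0\<^sub>m n c"
  using block_index_less[of b m] by (intro eq_matI) auto

lemma eq_block_rowI:
  assumes "X \<in> carrier_mat (m*n) c" "Y \<in> carrier_mat (m*n) c"
    and "\<And>b. b < m \<Longrightarrow> block_row n X b = block_row n Y b"
  shows "X = Y"
proof (rule eq_matI)
  fix i q assume "i < dim_row Y" "q < dim_col Y"
  then have i: "i < m*n" and q: "q < c" using assms(2) by auto
  then have "n > 0" by (cases n) auto
  then have "i div n < m" "i mod n < n" using i by (auto simp: div_less_iff_less_mult)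
  then have "block_row n X (i div n) $$ (i mod n, q) = block_row n Y (i div n) $$ (i mod n, q)"
    using assms(3) by simp
  then show "X $$ (i,q) = Y $$ (i,q)" using assms q \<open>i mod n < n\<close> by simp
qed (use assms in auto)

definition block_stack :: "nat \<Rightarrow> nat \<Rightarrow> (nat \<Rightarrow> 'a mat) \<Rightarrow> 'a mat" where
  "block_stack n m e = mat (m*n) n (\<lambda>(i,q). e (i div n) $$ (i mod n, q))"

lemma block_stack_carrier[simp]: "block_stack n m e \<in> carrier_mat (m*n) n"
  and dim_block_stack[simp]: "dim_row (block_stack n m e) = m*n" "dim_col (block_stack n m e) = n"
  by (simp_all add: block_stack_def)

lemma block_row_block_stack:
  assumes "e b \<in> carrier_mat n n" "b < m"
  shows "block_row n (block_stack n m e) b = e b"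
proof (rule eq_matI)
  fix p q assume "p < dim_row (e b)" "q < dim_col (e b)"
  then have p: "p < n" and q: "q < n" using assms(1) by auto
  then show "block_row n (block_stack n m e) b $$ (p,q) = e b $$ (p,q)"
    using block_index_less[OF assms(2) p] by (simp add: block_stack_def)
qed (use assms in simp_all)

lemma block_stack_cong:
  assumes "\<And>j. j < m \<Longrightarrow> e j = e' j"
  shows "block_stack n m e = block_stack n m e'"
proof -
  have "e (i div n) = e' (i div n)" if "i < m*n" for i
  proof -
    have "n > 0" using that by (cases n) auto
    then show ?thesis using that assms by (simp add: div_less_iff_less_mult)
  qed
  then show ?thesis by (auto simp: block_stack_def intro!: cong_mat)
qed

definition block_unit :: "nat \<Rightarrow> nat \<Rightarrow> nat \<Rightarrow> 'a :: zero_neq_one mat" where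
  "block_unit n m j = mat n (m*n) (\<lambda>(p,q). if q = j*n+p then 1 else 0)"

lemma block_unit_carrier[simp]: "block_unit n m j \<in> carrier_mat n (m*n)"
  and dim_block_unit[simp]: "dim_row (block_unit n m j) = n" "dim_col (block_unit n m j) = m*n"
  by (simp_all add: block_unit_def)

lemma block_unit_mult:
  assumes "X \<in> carrier_mat (m*n) c" "j < m"
  shows "block_unit n m j * (X :: 'a :: semiring_1 mat) = block_row n X j"
proof (rule eq_matI)
  fix p q assume "p < dim_row (block_row n X j)" "q < dim_col (block_row n X j)"
  then have p: "p < n" and q: "q < c" using assms by auto
  have jp: "j*n+p < m*n" using block_index_less[OF assms(2) p] .
  have "(block_unit n m j * X) $$ (p,q) = (\<Sum>i\<in>{0..<m*n}. (if i = j*n+p then 1 else 0) * X $$ (i,q))"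
    using assms p q by (simp add: block_unit_def scalar_prod_def)
  also have "\<dots> = (\<Sum>i\<in>{0..<m*n}. if i = j*n+p then X $$ (i,q) else 0)"
    by (rule sum.cong) auto
  also have "\<dots> = X $$ (j*n+p, q)" using jp by (simp only: sum.delta finite_atLeastLessThan atLeastLessThan_iff) simp
  also have "\<dots> = block_row n X j $$ (p,q)" using assms p q by simp
  finally show "(block_unit n m j * X) $$ (p,q) = block_row n X j $$ (p,q)" .
qed (use assms in simp_all)

lemma mult_block_unit:
  fixes A :: "'a :: semiring_1 mat"
  assumes "A \<in> carrier_mat r n" "j < m"
  shows "A * block_unit n m j = mat r (m*n) (\<lambda>(p,q). if q div n = j then A $$ (p, q mod n) else 0)"
proof (rule eq_matI)
  fix p q assume "p < dim_row (mat r (m*n) (\<lambda>(p,q). if q div n = j then A $$ (p, q mod n) else (0::'a)))"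
    "q < dim_col (mat r (m*n) (\<lambda>(p,q). if q div n = j then A $$ (p, q mod n) else (0::'a)))"
  then have p: "p < r" and q: "q < m*n" by auto
  then have n: "n > 0" by (cases n) auto
  have "(A * block_unit n m j) $$ (p,q) = (\<Sum>l<n. A $$ (p,l) * block_unit n m j $$ (l,q))"
    by (rule index_mult_mat_sum[OF assms(1) block_unit_carrier p q])
  also have "\<dots> = (\<Sum>l<n. A $$ (p,l) * (if q = j*n+l then 1 else 0))"
    using q by (intro sum.cong refl) (simp add: block_unit_def)
  also have "\<dots> = (\<Sum>l<n. if l = q mod n \<and> q div n = j then A $$ (p,l) else 0)"
    by (rule sum.cong) (auto simp: n)
  also have "\<dots> = (if q div n = j then A $$ (p, q mod n) else 0)"
    using n by (simp add: sum.delta' conj_commute)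
  finally show "(A * block_unit n m j) $$ (p,q) = mat r (m*n) (\<lambda>(p,q). if q div n = j then A $$ (p, q mod n) else 0) $$ (p,q)"
    using p q by simp
qed (use assms in simp_all)

section \<open>The companion matrices\<close>

text \<open>The number \<open>m = 2s+1\<close> of blocks is kept folded: the simplifier would rewrite
  \<open>(2*s+1)*n\<close> to \<open>n + 2*s*n\<close>, and carrier facts would then no longer match.\<close>

locale block_companion =
  fixes n s :: nat and a :: "nat \<Rightarrow> nat \<Rightarrow> real mat"
  assumes a_carrier[simp]: "\<And>k i. i \<le> 2*s \<Longrightarrow> a k i \<in> carrier_mat n n"
  fixes m :: nat
  defines m_def: "m \<equiv> 2*s+1"
begin

lemma less_m_iff[simp]: "i < m \<longleftrightarrow> i \<le> 2*s"
  by (simp add: m_def less_Suc_eq_le)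

lemma dim_a[simp]: "i \<le> 2*s \<Longrightarrow> dim_row (a k i) = n" "i \<le> 2*s \<Longrightarrow> dim_col (a k i) = n"
  using a_carrier by blast+

lemma Qmat_carrier[simp]: "Qmat n s a' k \<in> carrier_mat (m*n) (m*n)"
  by (simp add: Qmat_def m_def)

lemma rmat_carrier[simp]: "rmat n s a' k \<in> carrier_mat (m*n) n"
  by (simp add: rmat_def m_def)

lemma Qprod_carrier[simp]: "Qprod n s a' k l \<in> carrier_mat (m*n) (m*n)"
proof (induction l)
  case (Suc l)
  show ?case unfolding Qprod.simps by (rule mult_carrier_mat[OF Suc Qmat_carrier])
qed (simp add: m_def)

lemma Fmat_carrier[simp]: "Fmat n s a' k l \<in> carrier_mat (m*n) n"
  unfolding Fmat_def by (rule mult_carrier_mat[OF Qprod_carrier rmat_carrier])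

lemma Nmat_carrier[simp]: "Nmat n s a' k \<in> carrier_mat (m*n) (m*n)"
  by (simp add: Nmat_def m_def)

lemma companion_dims[simp]:
  "dim_row (Qmat n s a' k) = m*n" "dim_col (Qmat n s a' k) = m*n"
  "dim_row (rmat n s a' k) = m*n" "dim_col (rmat n s a' k) = n"
  "dim_row (Qprod n s a' k l) = m*n" "dim_col (Qprod n s a' k l) = m*n"
  "dim_row (Fmat n s a' k l) = m*n" "dim_col (Fmat n s a' k l) = n"
  "dim_row (Nmat n s a' k) = m*n" "dim_col (Nmat n s a' k) = m*n"
  by (metis carrier_matD Qmat_carrier rmat_carrier Qprod_carrier Fmat_carrier Nmat_carrier)+

lemma index_Nmat:
  "i < m*n \<Longrightarrow> j < m*n \<Longrightarrow> Nmat n s a' k $$ (i,j) = Fmat n s a' k (j div n) $$ (i, j mod n)"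
  by (simp add: Nmat_def m_def)

lemma Qprod_Suc_left: "Qprod n s a' k (Suc l) = Qmat n s a' k * Qprod n s a' (Suc k) l"
proof (induction l)
  case 0
  then show ?case by (simp add: m_def)
next
  case (Suc l)
  have "Qprod n s a' k (Suc (Suc l)) = Qmat n s a' k * Qprod n s a' (Suc k) l * Qmat n s a' (Suc k + l)"
    using Suc by simp
  then show ?case by (simp add: assoc_mult_mat[OF Qmat_carrier Qprod_carrier Qmat_carrier])
qed

lemma Fmat_0: "Fmat n s a' k 0 = rmat n s a' k"
  by (simp add: Fmat_def m_def)

lemma Fmat_Suc: "Fmat n s a' k (Suc l) = Qmat n s a' k * Fmat n s a' (Suc k) l"
  unfolding Fmat_def Qprod_Suc_left by (simp add: assoc_mult_mat[OF Qmat_carrier Qprod_carrier rmat_carrier])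

lemma Nmat_mult_entry:
  assumes "X \<in> carrier_mat (m*n) c" "i < m*n" "q < c"
  shows "(Nmat n s a' k * X) $$ (i,q) = (\<Sum>j<m. (Fmat n s a' k j * block_row n X j) $$ (i,q))"
proof -
  have "(Nmat n s a' k * X) $$ (i,q) = (\<Sum>l<m*n. Nmat n s a' k $$ (i,l) * X $$ (l,q))"
    by (rule index_mult_mat_sum[OF Nmat_carrier assms])
  also have "\<dots> = (\<Sum>j<m. \<Sum>p<n. Nmat n s a' k $$ (i, j*n+p) * X $$ (j*n+p, q))"
    by (rule sum_lessThan_mult_split)
  also have "\<dots> = (\<Sum>j<m. (Fmat n s a' k j * block_row n X j) $$ (i,q))"
  proof (rule sum.cong[OF refl])
    fix j assume "j \<in> {..<m}"
    then have "j*n+p < m*n" if "p < n" for p using block_index_less that by blast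
    then show "(\<Sum>p<n. Nmat n s a' k $$ (i, j*n+p) * X $$ (j*n+p, q)) = (Fmat n s a' k j * block_row n X j) $$ (i,q)"
      using assms
      by (simp add: index_mult_mat_sum[OF Fmat_carrier block_row_carrier[OF assms(1)] assms(2,3)] index_Nmat)
  qed
  finally show ?thesis .
qed

lemma mult_Nmat_entry:
  assumes "U \<in> carrier_mat r (m*n)" "x < r" "j < m*n"
  shows "(U * Nmat n s a' k) $$ (x,j) = (U * Fmat n s a' k (j div n)) $$ (x, j mod n)"
proof -
  have n: "n > 0" using assms(3) by (cases n) auto
  then have "col (Nmat n s a' k) j = col (Fmat n s a' k (j div n)) (j mod n)"
    using assms(3) by (intro eq_vecI) (simp_all add: index_Nmat)
  then show ?thesis using assms n by simp
qed

lemma mult_Nmat_eq_zero_iff: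
  assumes U: "U \<in> carrier_mat r (m*n)"
  shows "U * Nmat n s a' k = 0\<^sub>m r (m*n) \<longleftrightarrow> (\<forall>t \<le> 2*s. U * Fmat n s a' k t = 0\<^sub>m r n)"
proof
  assume N: "U * Nmat n s a' k = 0\<^sub>m r (m*n)"
  show "\<forall>t \<le> 2*s. U * Fmat n s a' k t = 0\<^sub>m r n"
  proof (intro allI impI eq_matI)
    fix t x q assume t: "t \<le> 2*s" and "x < dim_row (0\<^sub>m r n :: real mat)" "q < dim_col (0\<^sub>m r n :: real mat)"
    then have x: "x < r" and q: "q < n" by auto
    have "t*n+q < m*n" using block_index_less[of t m q n] t q by simp
    then show "(U * Fmat n s a' k t) $$ (x,q) = 0\<^sub>m r n $$ (x,q)"
      using mult_Nmat_entry[OF U x, of "t*n+q" a' k] N x q by simp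
  qed (use U in simp_all)
next
  assume F: "\<forall>t \<le> 2*s. U * Fmat n s a' k t = 0\<^sub>m r n"
  show "U * Nmat n s a' k = 0\<^sub>m r (m*n)"
  proof (rule eq_matI)
    fix x j assume "x < dim_row (0\<^sub>m r (m*n) :: real mat)" "j < dim_col (0\<^sub>m r (m*n) :: real mat)"
    then have x: "x < r" and j: "j < m*n" by auto
    then have "n > 0" by (cases n) auto
    then have "j div n \<le> 2*s" "j mod n < n" using j by (auto simp: less_Suc_eq_le[symmetric] div_less_iff_less_mult m_def)
    then show "(U * Nmat n s a' k) $$ (x,j) = 0\<^sub>m r (m*n) $$ (x,j)"
      using mult_Nmat_entry[OF U x j] F x j by simp
  qed (use U in simp_all)
qed

lemma block_row_rmat:
  assumes "i \<le> 2*s"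
  shows "block_row n (rmat n s a k) i = (if even i then a k i else 0\<^sub>m n n)"
proof (rule eq_matI)
  fix p q assume "p < dim_row (if even i then a k i else 0\<^sub>m n n)" "q < dim_col (if even i then a k i else 0\<^sub>m n n)"
  then have "p < n" "q < n" using assms by (auto split: if_splits)
  then show "block_row n (rmat n s a k) i $$ (p,q) = (if even i then a k i else 0\<^sub>m n n) $$ (p,q)"
    using assms block_index_less[of i m p n] by (simp add: rmat_def m_def)
qed (use assms in simp_all)

lemma block_row_Qmat:
  assumes "i \<le> 2*s"
  shows "block_row n (Qmat n s a k) i =
    (if i = 0 then 0\<^sub>m n (m*n) else block_unit n m (i-1)) + a k i * block_unit n m (2*s)"
proof -
  have last: "a k i * block_unit n m (2*s) =
      mat n (m*n) (\<lambda>(p,j). if j div n = 2*s then a k i $$ (p, j mod n) else 0)"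
    by (rule mult_block_unit[OF a_carrier[OF assms]]) simp
  show ?thesis unfolding last
  proof (rule eq_matI, goal_cases)
    case (1 p j)
    then have p: "p < n" and j: "j < m*n" by simp_all
    have shift: "(i \<noteq> 0 \<and> j = (i-1)*n+p) \<longleftrightarrow> (i = j div n + 1 \<and> p = j mod n)"
      using eq_block_index_iff[OF p, of j "i-1"] by auto
    have "i*n+p < m*n" using block_index_less[of i m p n] assms p by simp
    then show ?case using assms p j shift by (simp add: Qmat_def block_unit_def m_def)
  qed (use assms in simp_all)
qed

lemma rmat_mult_block_row:
  assumes "Y \<in> carrier_mat n c" "i \<le> 2*s"
  shows "block_row n (rmat n s a k * Y) i = (if even i then a k i * Y else 0\<^sub>m n c)"
  using assms by (simp add: block_row_mult[of _ m n n] block_row_rmat)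

lemma Qmat_mult_block_row:
  assumes X: "X \<in> carrier_mat (m*n) c" and i: "i \<le> 2*s"
  shows "block_row n (Qmat n s a k * X) i =
    (if i = 0 then 0\<^sub>m n c else block_row n X (i-1)) + a k i * block_row n X (2*s)"
proof -
  let ?U = "block_unit n m" and ?S = "if i = 0 then 0\<^sub>m n (m*n) else block_unit n m (i-1)"
  have U: "?U j \<in> carrier_mat n (m*n)" for j by (rule block_unit_carrier)
  have S: "?S \<in> carrier_mat n (m*n)" using U by simp
  have aU: "a k i * ?U (2*s) \<in> carrier_mat n (m*n)" by (rule mult_carrier_mat[OF a_carrier[OF i] U])
  have "block_row n (Qmat n s a k * X) i = (?S + a k i * ?U (2*s)) * X"
    using i by (simp add: block_row_mult[OF Qmat_carrier X] block_row_Qmat)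
  also have "\<dots> = ?S * X + a k i * (?U (2*s) * X)"
    by (simp add: add_mult_distrib_mat[OF S aU X] assoc_mult_mat[OF a_carrier[OF i] U X])
  also have "?S * X = (if i = 0 then 0\<^sub>m n c else block_row n X (i-1))"
    using X i by (simp add: block_unit_mult)
  finally show ?thesis using X by (simp add: block_unit_mult)
qed

end

section \<open>Tail sums\<close>

function tail_sum :: "nat \<Rightarrow> nat \<Rightarrow> (nat \<Rightarrow> nat \<Rightarrow> real mat) \<Rightarrow> nat \<Rightarrow> (nat \<Rightarrow> real mat) \<Rightarrow> nat \<Rightarrow> real mat"
  where "tail_sum n s a k e l =
    (if l < 2*s+1 then rmat n s a (k+l) * e l + Qmat n s a (k+l) * tail_sum n s a k e (Suc l)
     else rmat n s a (k+l) * e l)"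
  by auto
termination by (relation "measure (\<lambda>(n,s,a,k,e,l). 2*s+1-l)") auto

declare tail_sum.simps[simp del]

context block_companion
begin

lemma tail_sum_last: "tail_sum n s a' k e m = rmat n s a' (k+m) * e m"
  by (simp add: tail_sum.simps m_def)

lemma tail_sum_step:
  "l \<le> 2*s \<Longrightarrow> tail_sum n s a' k e l = rmat n s a' (k+l) * e l + Qmat n s a' (k+l) * tail_sum n s a' k e (Suc l)"
  by (simp add: tail_sum.simps[of n s a' k e l] less_Suc_eq_le)

lemma tail_sum_carrier:
  assumes e: "\<And>j. e j \<in> carrier_mat n n" and "l \<le> m"
  shows "tail_sum n s a' k e l \<in> carrier_mat (m*n) n"
  using assms(2)
proof (induction l rule: inc_induct)
  case base
  show ?case unfolding tail_sum_last by (rule mult_carrier_mat[OF rmat_carrier e])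
next
  case (step l)
  then have "l \<le> 2*s" by (simp add: m_def)
  then show ?case unfolding tail_sum_step[OF \<open>l \<le> 2*s\<close>]
    by (intro add_carrier_mat mult_carrier_mat[OF rmat_carrier e] mult_carrier_mat[OF Qmat_carrier step.IH])
qed

lemma tail_sum_entry:
  assumes e: "\<And>j. e j \<in> carrier_mat n n" and "l \<le> m" and "i < m*n" and "q < n"
  shows "tail_sum n s a' k e l $$ (i,q) = (\<Sum>j=l..m. (Fmat n s a' (k+l) (j-l) * e j) $$ (i,q))"
  using assms(2,3)
proof (induction l arbitrary: i rule: inc_induct)
  case base
  then show ?case by (simp add: tail_sum_last Fmat_0)
next
  case (step l)
  then have l: "l \<le> 2*s" by (simp add: m_def)
  let ?T = "tail_sum n s a' k e (Suc l)" and ?Q = "Qmat n s a' (k+l)"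
  have T: "?T \<in> carrier_mat (m*n) n" using l by (intro tail_sum_carrier[OF e]) (simp add: m_def)
  have "(?Q * ?T) $$ (i,q) = (\<Sum>i'<m*n. ?Q $$ (i,i') * ?T $$ (i',q))"
    by (rule index_mult_mat_sum[OF Qmat_carrier T step.prems assms(4)])
  also have "\<dots> = (\<Sum>i'<m*n. \<Sum>j=Suc l..m. ?Q $$ (i,i') * (Fmat n s a' (k + Suc l) (j - Suc l) * e j) $$ (i',q))"
    by (intro sum.cong refl) (simp add: step.IH sum_distrib_left)
  also have "\<dots> = (\<Sum>j=Suc l..m. (?Q * (Fmat n s a' (k + Suc l) (j - Suc l) * e j)) $$ (i,q))"
    by (subst sum.swap) (simp add: index_mult_mat_sum[OF Qmat_carrier mult_carrier_mat[OF Fmat_carrier e] step.prems assms(4)])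
  also have "\<dots> = (\<Sum>j=Suc l..m. (Fmat n s a' (k+l) (j-l) * e j) $$ (i,q))"
  proof (rule sum.cong[OF refl])
    fix j assume "j \<in> {Suc l..m}"
    then have "Suc (j - Suc l) = j - l" by auto
    then show "(?Q * (Fmat n s a' (k + Suc l) (j - Suc l) * e j)) $$ (i,q) = (Fmat n s a' (k+l) (j-l) * e j) $$ (i,q)"
      using assoc_mult_mat[OF Qmat_carrier Fmat_carrier e] Fmat_Suc[of a' "k+l" "j - Suc l"] by simp
  qed
  finally have "(?Q * ?T) $$ (i,q) = (\<Sum>j=Suc l..m. (Fmat n s a' (k+l) (j-l) * e j) $$ (i,q))" .
  moreover have "(rmat n s a' (k+l) * e l) $$ (i,q) = (Fmat n s a' (k+l) (l-l) * e l) $$ (i,q)"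
    by (simp add: Fmat_0)
  moreover have "tail_sum n s a' k e l $$ (i,q) = (rmat n s a' (k+l) * e l) $$ (i,q) + (?Q * ?T) $$ (i,q)"
    using T step.prems assms(4) by (simp add: tail_sum_step[OF l])
  moreover have "l \<le> m" using l by (simp add: m_def)
  ultimately show ?case by (simp add: sum.atLeast_Suc_atMost)
qed

lemma tail_sum_0:
  assumes e: "\<And>j. e j \<in> carrier_mat n n"
  shows "tail_sum n s a' k e 0 = Nmat n s a' k * block_stack n m e + Fmat n s a' k m * e m"
proof -
  have T: "tail_sum n s a' k e 0 \<in> carrier_mat (m*n) n" by (rule tail_sum_carrier[OF e]) simp
  show ?thesis
  proof (rule eq_matI, goal_cases)
    case (1 i q)
    then have i: "i < m*n" and q: "q < n" using e[of m] by simp_all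
    have "tail_sum n s a' k e 0 $$ (i,q) = (\<Sum>j<m. (Fmat n s a' k j * e j) $$ (i,q)) + (Fmat n s a' k m * e m) $$ (i,q)"
      using tail_sum_entry[OF e _ i q, of 0] by (simp add: atLeast0AtMost lessThan_Suc_atMost[symmetric])
    also have "(\<Sum>j<m. (Fmat n s a' k j * e j) $$ (i,q)) = (Nmat n s a' k * block_stack n m e) $$ (i,q)"
      using Nmat_mult_entry[OF block_stack_carrier i q, of a' k e] e by (simp add: block_row_block_stack)
    finally show ?case using i q e[of m] by simp
  qed (use T e[of m] in simp_all)
qed

lemma tail_sum_zero_input:
  assumes e: "\<And>j. e j \<in> carrier_mat n n" and zero: "\<And>j. j \<le> m \<Longrightarrow> e j = 0\<^sub>m n n" and "l \<le> m"
  shows "tail_sum n s a' k e l = 0\<^sub>m (m*n) n"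
proof (rule eq_matI, goal_cases)
  case (1 i q)
  then show ?case using assms tail_sum_entry[OF e \<open>l \<le> m\<close>, of i q] by simp
qed (use carrier_matD[OF tail_sum_carrier[where e = e, OF e \<open>l \<le> m\<close>]] in simp_all)

lemma tail_sum_block_row:
  assumes e: "\<And>j. e j \<in> carrier_mat n n" and l: "l \<le> 2*s" and i: "i \<le> 2*s"
  shows "block_row n (tail_sum n s a k e l) i =
    (if even i then a (k+l) i * e l else 0\<^sub>m n n)
    + ((if i = 0 then 0\<^sub>m n n else block_row n (tail_sum n s a k e (Suc l)) (i-1))
       + a (k+l) i * block_row n (tail_sum n s a k e (Suc l)) (2*s))"
proof -
  have T: "tail_sum n s a k e (Suc l) \<in> carrier_mat (m*n) n"
    using l by (intro tail_sum_carrier[OF e]) (simp add: m_def)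
  show ?thesis unfolding tail_sum_step[OF l] using i
    by (simp add: block_row_add[OF mult_carrier_mat[OF rmat_carrier e] mult_carrier_mat[OF Qmat_carrier T]]
        rmat_mult_block_row[OF e] Qmat_mult_block_row[OF T])
qed

lemma tail_sum_last_block_row:
  assumes e: "\<And>j. e j \<in> carrier_mat n n" and i: "i \<le> 2*s"
  shows "block_row n (tail_sum n s a k e m) i = (if even i then a (k+m) i * e m else 0\<^sub>m n n)"
  unfolding tail_sum_last using i by (rule rmat_mult_block_row[OF e])

lemma tail_sum_parity_split:
  assumes e: "\<And>j. e j \<in> carrier_mat n n" and \<epsilon>: "\<And>j. \<epsilon> j \<in> carrier_mat n n"
    and \<epsilon>_even: "\<And>l. l \<le> 2*s \<Longrightarrow> even l \<Longrightarrow> \<epsilon> l = e l + block_row n (tail_sum n s a k e (Suc l)) (2*s)"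
    and \<epsilon>_odd: "\<And>l. l \<le> 2*s \<Longrightarrow> odd l \<Longrightarrow> \<epsilon> l = - block_row n (tail_sum n s a k e (Suc l)) (2*s)"
    and \<epsilon>_last: "\<epsilon> m = 0\<^sub>m n n"
    and "l \<le> m" and "i \<le> 2*s"
  shows "block_row n (tail_sum n s a k \<epsilon> l) i =
    (if even i = even l then block_row n (tail_sum n s a k e l) i else 0\<^sub>m n n)"
  using assms(6,7)
proof (induction l arbitrary: i rule: inc_induct)
  case base
  have "odd m" by (simp add: m_def)
  then show ?case using base \<epsilon>_last by (simp add: tail_sum_last_block_row[OF \<epsilon>] tail_sum_last_block_row[OF e])
next
  case (step l)
  then have l: "l \<le> 2*s" by simp
  let ?G = "\<lambda>j. block_row n (tail_sum n s a k e (Suc l)) j"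
  have T: "tail_sum n s a k e (Suc l) \<in> carrier_mat (m*n) n"
    using l by (intro tail_sum_carrier[where e = e, OF e]) (simp add: m_def)
  then have G: "?G j \<in> carrier_mat n n" for j by (rule block_row_carrier)
  have IH: "block_row n (tail_sum n s a k \<epsilon> (Suc l)) j = (if even j = odd l then ?G j else 0\<^sub>m n n)"
    if "j \<le> 2*s" for j
    using step.IH[OF that] by simp
  have a\<epsilon>: "a (k+l) j * \<epsilon> l =
      (if even l then a (k+l) j * e l + a (k+l) j * ?G (2*s) else - (a (k+l) j * ?G (2*s)))"
    if "j \<le> 2*s" for j using that l by (simp add: \<epsilon>_even \<epsilon>_odd mult_add_distrib_mat[OF a_carrier e G])
  show ?case
    unfolding tail_sum_block_row[OF \<epsilon> l step.prems] tail_sum_block_row[OF e l step.prems]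
    using step.prems l
    by (cases "even l"; cases "even i"; cases "i = 0")
      (simp_all add: IH a\<epsilon>, auto intro!: eq_matI simp: carrier_matD[OF T] carrier_matD[OF e])
qed

lemma tail_sum_eq_zero:
  assumes e: "\<And>j. e j \<in> carrier_mat n n" and det: "det (Nmat n s a' k) \<noteq> 0"
    and last: "e m = 0\<^sub>m n n" and T0: "tail_sum n s a' k e 0 = 0\<^sub>m (m*n) n" and "l \<le> m"
  shows "tail_sum n s a' k e l = 0\<^sub>m (m*n) n"
proof -
  have "Nmat n s a' k * block_stack n m e \<in> carrier_mat (m*n) n"
    by (rule mult_carrier_mat[OF Nmat_carrier block_stack_carrier])
  then have "Nmat n s a' k * block_stack n m e = Nmat n s a' k * 0\<^sub>m (m*n) n"
    using tail_sum_0[where e = e, OF e] last T0 by simp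
  then have stack: "block_stack n m e = 0\<^sub>m (m*n) n"
    by (rule det_nonzero_mult_left_cancel[OF Nmat_carrier det block_stack_carrier zero_carrier_mat])
  have "e j = 0\<^sub>m n n" if "j \<le> m" for j
  proof (cases "j = m")
    case False
    with that have "j < m" by linarith
    then show ?thesis using block_row_block_stack[where e = e, OF e] stack by (metis block_row_zero)
  qed (simp add: last)
  then show ?thesis by (intro tail_sum_zero_input[OF e _ \<open>l \<le> m\<close>])
qed

lemma tail_sum_parity_vanish:
  assumes e: "\<And>j. e j \<in> carrier_mat n n" and det: "det (Nmat n s a k) \<noteq> 0"
    and T0: "tail_sum n s a k e 0 = 0\<^sub>m (m*n) n"
    and l: "l \<le> m" and i: "i \<le> 2*s" and parity: "even i = even l"
  shows "block_row n (tail_sum n s a k e l) i = 0\<^sub>m n n"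
proof -
  let ?G = "\<lambda>l. block_row n (tail_sum n s a k e (Suc l)) (2*s)"
  define \<epsilon> where "\<epsilon> l = (if l \<le> 2*s then if even l then e l + ?G l else - ?G l else 0\<^sub>m n n)" for l
  have G: "?G l \<in> carrier_mat n n" if "l \<le> 2*s" for l
    using that by (intro block_row_carrier[OF tail_sum_carrier[where e = e, OF e]]) (simp add: m_def)
  have \<epsilon>_carrier: "\<epsilon> j \<in> carrier_mat n n" for j
    using G[of j] e[of j] by (simp add: \<epsilon>_def)
  have \<epsilon>_last: "\<epsilon> m = 0\<^sub>m n n" by (simp add: \<epsilon>_def m_def)
  have split: "block_row n (tail_sum n s a k \<epsilon> l') i' =
      (if even i' = even l' then block_row n (tail_sum n s a k e l') i' else 0\<^sub>m n n)"
    if "l' \<le> m" "i' \<le> 2*s" for l' i'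
    using that e \<epsilon>_carrier \<epsilon>_last
    by (intro tail_sum_parity_split[where e = e and \<epsilon> = \<epsilon>]) (simp_all add: \<epsilon>_def)
  have "tail_sum n s a k \<epsilon> 0 = 0\<^sub>m (m*n) n"
  proof (rule eq_block_rowI[of _ m n n])
    fix b assume "b < m"
    then show "block_row n (tail_sum n s a k \<epsilon> 0) b = block_row n (0\<^sub>m (m*n) n) b"
      using split[of 0 b] by (simp add: T0 block_row_zero)
  qed (simp_all add: tail_sum_carrier[OF \<epsilon>_carrier])
  then have "tail_sum n s a k \<epsilon> l = 0\<^sub>m (m*n) n"
    by (rule tail_sum_eq_zero[where e = \<epsilon>, OF \<epsilon>_carrier det \<epsilon>_last _ l])
  then show ?thesis using split[OF l i] parity i by (simp add: block_row_zero)
qed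

end

section \<open>Scaling\<close>

lemma sdeg_eq: "s \<ge> 1 \<Longrightarrow> sdeg s i = real i / real (2*s) - (if odd i then 1 + 1 / real (2*s) else 0)"
  by (auto simp: sdeg_def field_simps elim!: oddE evenE)

lemma block_scaling_coefficients:
  fixes \<mu> :: real
  assumes s: "s \<ge> 1" and \<mu>: "\<mu> > 0" and x: "b = 0 \<Longrightarrow> x = 0"
  shows "\<mu> powr (real b / real (2*s)) * (x + y) =
      \<mu> powr (1 / real (2*s)) * (\<mu> powr (real (b-1) / real (2*s)) * x + (\<mu> powr sdeg s b * \<mu>) * y)
      + (1 - \<mu> powr (1 + 1 / real (2*s))) * (if even b then \<mu> powr sdeg s b * y else 0)"
proof -
  let ?c = "\<mu> powr (1 / real (2*s))"
  have shift: "?c * \<mu> powr (real (b-1) / real (2*s)) = \<mu> powr (real b / real (2*s))" if "0 < b"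
    using that s by (simp add: powr_add[symmetric] of_nat_diff field_simps)
  have \<mu>1: "\<mu> powr (1 + 1 / real (2*s)) = \<mu> * ?c" using \<mu> by (subst powr_add) simp
  have last: "?c * (\<mu> powr sdeg s b * \<mu>)
      + (if even b then (1 - \<mu> powr (1 + 1 / real (2*s))) * \<mu> powr sdeg s b else 0) = \<mu> powr (real b / real (2*s))"
  proof (cases "even b")
    case True
    then show ?thesis unfolding \<mu>1 by (simp add: sdeg_eq[OF s] algebra_simps)
  next
    case False
    then have deg: "sdeg s b + (1 + 1 / real (2*s)) = real b / real (2*s)" by (simp add: sdeg_eq[OF s])
    have "?c * (\<mu> powr sdeg s b * \<mu>) = \<mu> powr sdeg s b * \<mu> powr (1 + 1 / real (2*s))"
      unfolding \<mu>1 by (simp add: ac_simps)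
    then show ?thesis using False unfolding deg powr_add[symmetric] by simp
  qed
  have "?c * (\<mu> powr (real (b-1) / real (2*s)) * x + (\<mu> powr sdeg s b * \<mu>) * y)
      + (1 - \<mu> powr (1 + 1 / real (2*s))) * (if even b then \<mu> powr sdeg s b * y else 0)
    = (?c * \<mu> powr (real (b-1) / real (2*s))) * x
      + (?c * (\<mu> powr sdeg s b * \<mu>) + (if even b then (1 - \<mu> powr (1 + 1 / real (2*s))) * \<mu> powr sdeg s b else 0)) * y"
    by (simp add: algebra_simps)
  also have "\<dots> = \<mu> powr (real b / real (2*s)) * (x + y)"
    using shift last x by (cases "b = 0") (simp_all add: algebra_simps)
  finally show ?thesis by simp
qed

definition block_scaling :: "nat \<Rightarrow> nat \<Rightarrow> real \<Rightarrow> real mat" where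
  "block_scaling n s \<mu> = mat_diag ((2*s+1)*n) (\<lambda>i. \<mu> powr (real (i div n) / real (2*s)))"

context block_companion
begin

lemma scale_companion: "block_companion n s (scale s \<mu> a)"
  by unfold_locales (simp add: scale_def)

lemma scale_mult_smult:
  assumes "i \<le> 2*s" "B \<in> carrier_mat n c"
  shows "scale s \<mu> a k i * (x \<cdot>\<^sub>m B) = (\<mu> powr sdeg s i * x) \<cdot>\<^sub>m (a k i * B)"
  using assms by (simp add: scale_def smult_mult_smult[of _ n n _ c])

lemma tail_sum_scale_block_row_step:
  assumes s: "s \<ge> 1" and e: "\<And>j. e j \<in> carrier_mat n n"
    and parity: "\<And>l i. l \<le> m \<Longrightarrow> i \<le> 2*s \<Longrightarrow> even i = even l \<Longrightarrow>
      block_row n (tail_sum n s a k e l) i = 0\<^sub>m n n"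
    and l: "l \<le> 2*s" and i: "i \<le> 2*s"
    and IH: "\<And>j. j \<le> 2*s \<Longrightarrow>
      block_row n (tail_sum n s (scale s \<mu> a) k (\<lambda>j. \<mu> powr sdeg s j \<cdot>\<^sub>m e j) (Suc l)) j =
      \<mu> powr (sdeg s j + sdeg s (Suc l)) \<cdot>\<^sub>m block_row n (tail_sum n s a k e (Suc l)) j"
  shows "block_row n (tail_sum n s (scale s \<mu> a) k (\<lambda>j. \<mu> powr sdeg s j \<cdot>\<^sub>m e j) l) i =
    \<mu> powr (sdeg s i + sdeg s l) \<cdot>\<^sub>m block_row n (tail_sum n s a k e l) i"
proof -
  have Sl: "Suc l \<le> m" using l by (simp add: m_def)
  have e': "\<And>j. \<mu> powr sdeg s j \<cdot>\<^sub>m e j \<in> carrier_mat n n" using e by simp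
  let ?c = "\<mu> powr (sdeg s i + sdeg s l)"
  let ?G = "\<lambda>j. block_row n (tail_sum n s a k e (Suc l)) j"
    and ?H = "\<lambda>j. block_row n (tail_sum n s (scale s \<mu> a) k (\<lambda>j. \<mu> powr sdeg s j \<cdot>\<^sub>m e j) (Suc l)) j"
  have G: "?G j \<in> carrier_mat n n" for j
    by (rule block_row_carrier[OF tail_sum_carrier[where e = e, OF e Sl]])
  have first: "(if even i then scale s \<mu> a (k+l) i * (\<mu> powr sdeg s l \<cdot>\<^sub>m e l) else 0\<^sub>m n n)
      = ?c \<cdot>\<^sub>m (if even i then a (k+l) i * e l else 0\<^sub>m n n)"
    by (simp add: scale_mult_smult[OF i e] powr_add)
  have shift: "(if i = 0 then 0\<^sub>m n n else ?H (i-1)) = ?c \<cdot>\<^sub>m (if i = 0 then 0\<^sub>m n n else ?G (i-1))"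
  proof (cases "i = 0")
    case False
    then have i1: "i - 1 \<le> 2*s" using i by simp
    show ?thesis
    proof (cases "even i = even l")
      case True
      then have "?G (i-1) = 0\<^sub>m n n" using False by (intro parity[OF Sl i1]) auto
      then show ?thesis using IH[OF i1] by simp
    next
      case False
      then have "sdeg s (i-1) + sdeg s (Suc l) = sdeg s i + sdeg s l"
        using s \<open>i \<noteq> 0\<close> by (cases "even i") (auto simp: sdeg_eq[OF s] field_simps)
      then show ?thesis using IH[OF i1] \<open>i \<noteq> 0\<close> by simp
    qed
  qed simp
  have last: "scale s \<mu> a (k+l) i * ?H (2*s) = ?c \<cdot>\<^sub>m (a (k+l) i * ?G (2*s))"
  proof (cases "even l")
    case True
    then have "sdeg s i + (sdeg s (2*s) + sdeg s (Suc l)) = sdeg s i + sdeg s l"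
      using s by (simp add: sdeg_eq[OF s] field_simps)
    then show ?thesis using IH[of "2*s"] by (simp add: scale_mult_smult[OF i G] powr_add[symmetric])
  next
    case False
    then have "?G (2*s) = 0\<^sub>m n n" by (intro parity[OF Sl]) auto
    then show ?thesis using IH[of "2*s"] i by (simp add: scale_def)
  qed
  show ?thesis
    unfolding block_companion.tail_sum_block_row[OF scale_companion e' l i, folded m_def]
      tail_sum_block_row[OF e l i] first shift last
    using a_carrier[OF i, of "k+l"] e[of l] G by (simp add: add_smult_distrib_left_mat[where nr = n and nc = n])
qed

lemma tail_sum_scale_block_row:
  assumes s: "s \<ge> 1" and e: "\<And>j. e j \<in> carrier_mat n n"
    and parity: "\<And>l i. l \<le> m \<Longrightarrow> i \<le> 2*s \<Longrightarrow> even i = even l \<Longrightarrow>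
      block_row n (tail_sum n s a k e l) i = 0\<^sub>m n n"
    and "l \<le> m" and "i \<le> 2*s"
  shows "block_row n (tail_sum n s (scale s \<mu> a) k (\<lambda>j. \<mu> powr sdeg s j \<cdot>\<^sub>m e j) l) i =
    \<mu> powr (sdeg s i + sdeg s l) \<cdot>\<^sub>m block_row n (tail_sum n s a k e l) i"
  using assms(4,5)
proof (induction l arbitrary: i rule: inc_induct)
  case base
  have e': "\<And>j. \<mu> powr sdeg s j \<cdot>\<^sub>m e j \<in> carrier_mat n n" using e by simp
  show ?case
    using block_companion.tail_sum_last_block_row[OF scale_companion e' base, folded m_def]
      tail_sum_last_block_row[OF e base]
    by (simp add: scale_mult_smult[OF base e] powr_add)
next
  case (step l)
  then have l: "l \<le> 2*s" by simp
  show ?case by (rule tail_sum_scale_block_row_step[where e = e, OF s e parity l step.prems]) (simp_all add: step.IH)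
qed

lemma block_scaling_carrier[simp]: "block_scaling n s \<mu> \<in> carrier_mat (m*n) (m*n)"
  by (simp add: block_scaling_def m_def)

lemma block_row_block_scaling_mult:
  assumes X: "X \<in> carrier_mat (m*n) c" and b: "b \<le> 2*s"
  shows "block_row n (block_scaling n s \<mu> * X) b = \<mu> powr (real b / real (2*s)) \<cdot>\<^sub>m block_row n X b"
proof -
  have "block_scaling n s \<mu> * X = mat (m*n) c (\<lambda>(i,j). \<mu> powr (real (i div n) / real (2*s)) * X $$ (i,j))"
    unfolding block_scaling_def m_def[symmetric] by (rule mat_diag_mult_left[OF X])
  then show ?thesis using X b block_index_less[of b m _ n] by (intro eq_matI) auto
qed

lemma block_scaling_rmat:
  assumes s: "s \<ge> 1"
  shows "block_scaling n s \<mu> * rmat n s a k = rmat n s (scale s \<mu> a) k"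
proof (rule eq_block_rowI[of _ m n n])
  fix b assume "b < m"
  then have b: "b \<le> 2*s" by simp
  show "block_row n (block_scaling n s \<mu> * rmat n s a k) b = block_row n (rmat n s (scale s \<mu> a) k) b"
    unfolding block_row_block_scaling_mult[OF rmat_carrier b]
      block_row_rmat[OF b] block_companion.block_row_rmat[OF scale_companion b]
    using b by (simp add: scale_def sdeg_eq[OF s])
qed (simp_all add: mult_carrier_mat[OF block_scaling_carrier rmat_carrier])

lemma block_scaling_Qmat_mult:
  assumes s: "s \<ge> 1" and \<mu>: "\<mu> > 0" and X: "X \<in> carrier_mat (m*n) c"
  shows "block_scaling n s \<mu> * (Qmat n s a k * X) =
    \<mu> powr (1 / real (2*s)) \<cdot>\<^sub>m (Qmat n s (scale s \<mu> a) k * (block_scaling n s \<mu> * X))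
    + (1 - \<mu> powr (1 + 1 / real (2*s))) \<cdot>\<^sub>m (rmat n s (scale s \<mu> a) k * block_row n X (2*s))"
    (is "?L = ?c1 \<cdot>\<^sub>m ?P + ?c2 \<cdot>\<^sub>m ?R")
proof (rule eq_block_rowI[of _ m n c])
  have DX: "block_scaling n s \<mu> * X \<in> carrier_mat (m*n) c"
    by (rule mult_carrier_mat[OF block_scaling_carrier X])
  have P: "?P \<in> carrier_mat (m*n) c" by (rule mult_carrier_mat[OF Qmat_carrier DX])
  have R: "?R \<in> carrier_mat (m*n) c" by (rule mult_carrier_mat[OF rmat_carrier block_row_carrier[OF X]])
  show "?L \<in> carrier_mat (m*n) c" by (rule mult_carrier_mat[OF block_scaling_carrier mult_carrier_mat[OF Qmat_carrier X]])
  show "?c1 \<cdot>\<^sub>m ?P + ?c2 \<cdot>\<^sub>m ?R \<in> carrier_mat (m*n) c" using P R by simp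
  fix b assume "b < m"
  then have b: "b \<le> 2*s" by simp
  let ?S = "if b = 0 then 0\<^sub>m n c else block_row n X (b-1)" and ?A = "a k b * block_row n X (2*s)"
  have S: "?S \<in> carrier_mat n c" using X by (simp add: block_row_carrier)
  have A: "?A \<in> carrier_mat n c" using b by (intro mult_carrier_mat[OF a_carrier block_row_carrier[OF X]])
  have "block_row n ?L b = \<mu> powr (real b / real (2*s)) \<cdot>\<^sub>m (?S + ?A)"
    using b by (simp add: block_row_block_scaling_mult[OF mult_carrier_mat[OF Qmat_carrier X]] Qmat_mult_block_row[OF X])
  moreover have "block_row n ?P b = \<mu> powr (real (b-1) / real (2*s)) \<cdot>\<^sub>m ?S + (\<mu> powr sdeg s b * \<mu>) \<cdot>\<^sub>m ?A"
  proof -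
    have "block_row n ?P b = (if b = 0 then 0\<^sub>m n c else block_row n (block_scaling n s \<mu> * X) (b-1))
        + scale s \<mu> a k b * block_row n (block_scaling n s \<mu> * X) (2*s)"
      by (rule block_companion.Qmat_mult_block_row[OF scale_companion DX[unfolded m_def] b])
    then show ?thesis
      using b s \<mu> X by (simp add: block_row_block_scaling_mult[OF X] scale_def smult_mult_smult[of _ n n _ c] block_row_carrier)
  qed
  moreover have "block_row n ?R b = (if even b then \<mu> powr sdeg s b \<cdot>\<^sub>m ?A else 0\<^sub>m n c)"
  proof -
    have "block_row n ?R b = (if even b then scale s \<mu> a k b * block_row n X (2*s) else 0\<^sub>m n c)"
      by (rule block_companion.rmat_mult_block_row[OF scale_companion block_row_carrier[OF X] b])
    then show ?thesis using b X by (simp add: scale_def mult_smult_assoc_mat[of _ n n _ c] block_row_carrier)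
  qed
  moreover have "block_row n (?c1 \<cdot>\<^sub>m ?P + ?c2 \<cdot>\<^sub>m ?R) b = ?c1 \<cdot>\<^sub>m block_row n ?P b + ?c2 \<cdot>\<^sub>m block_row n ?R b"
    using b P R by (simp add: block_row_add[of _ m n c] block_row_smult)
  moreover note block_scaling_coefficients[OF s \<mu>, of b]
  ultimately show "block_row n ?L b = block_row n (?c1 \<cdot>\<^sub>m ?P + ?c2 \<cdot>\<^sub>m ?R) b"
    using S A b carrier_matD[OF X] by (intro eq_matI) auto
qed

lemma block_scaling_inverse:
  assumes "\<mu> > 0"
  shows "block_scaling n s \<mu> * block_scaling n s (1 / \<mu>) = 1\<^sub>m (m*n)"
  using assms by (simp add: block_scaling_def m_def powr_divide powr_minus_divide flip: mat_diag_one)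

lemma block_scaling_Fmat_annihilated:
  assumes s: "s \<ge> 1" and \<mu>: "\<mu> > 0" and U: "U \<in> carrier_mat r (m*n)"
    and ann: "\<And>t. t \<le> l \<Longrightarrow> U * Fmat n s (scale s \<mu> a) k t = 0\<^sub>m r n"
  shows "U * (block_scaling n s \<mu> * Fmat n s a k l) = 0\<^sub>m r n"
  using U ann
proof (induction l arbitrary: k U)
  case 0
  then show ?case using block_scaling_rmat[OF s] by (simp add: Fmat_0)
next
  case (Suc l)
  let ?a' = "scale s \<mu> a" and ?F = "Fmat n s a (Suc k) l"
  let ?P = "Qmat n s ?a' k * (block_scaling n s \<mu> * ?F)" and ?R = "rmat n s ?a' k * block_row n ?F (2*s)"
  have DF: "block_scaling n s \<mu> * ?F \<in> carrier_mat (m*n) n" by (rule mult_carrier_mat[OF block_scaling_carrier Fmat_carrier])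
  have B: "block_row n ?F (2*s) \<in> carrier_mat n n" by (rule block_row_carrier[OF Fmat_carrier])
  have UQ: "U * Qmat n s ?a' k \<in> carrier_mat r (m*n)" by (rule mult_carrier_mat[OF Suc.prems(1) Qmat_carrier])
  have "(U * Qmat n s ?a' k) * Fmat n s ?a' (Suc k) t = 0\<^sub>m r n" if "t \<le> l" for t
    using Suc.prems(2)[of "Suc t"] that Suc.prems(1)
    by (simp add: Fmat_Suc assoc_mult_mat[OF Suc.prems(1) Qmat_carrier Fmat_carrier])
  then have "(U * Qmat n s ?a' k) * (block_scaling n s \<mu> * ?F) = 0\<^sub>m r n"
    by (rule Suc.IH[OF UQ])
  then have UP: "U * ?P = 0\<^sub>m r n"
    by (simp add: assoc_mult_mat[OF Suc.prems(1) Qmat_carrier DF])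
  have "U * rmat n s ?a' k = 0\<^sub>m r n" using Suc.prems(2)[of 0] by (simp add: Fmat_0)
  then have UR: "U * ?R = 0\<^sub>m r n"
    using B by (simp add: assoc_mult_mat[OF Suc.prems(1) rmat_carrier B, symmetric])
  have "block_scaling n s \<mu> * Fmat n s a k (Suc l) =
      \<mu> powr (1 / real (2*s)) \<cdot>\<^sub>m ?P + (1 - \<mu> powr (1 + 1 / real (2*s))) \<cdot>\<^sub>m ?R"
    unfolding Fmat_Suc by (rule block_scaling_Qmat_mult[OF s \<mu> Fmat_carrier])
  moreover have P: "?P \<in> carrier_mat (m*n) n" and R: "?R \<in> carrier_mat (m*n) n"
    by (rule mult_carrier_mat[OF Qmat_carrier DF], rule mult_carrier_mat[OF rmat_carrier B])
  ultimately show ?case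
    using UP UR by (simp add: mult_add_distrib_mat[OF Suc.prems(1) smult_carrier_mat[OF P] smult_carrier_mat[OF R]]
        mult_smult_distrib[OF Suc.prems(1) P] mult_smult_distrib[OF Suc.prems(1) R])
qed

lemma det_Nmat_scale_nonzero:
  assumes s: "s \<ge> 1" and \<mu>: "\<mu> > 0" and det: "det (Nmat n s a k) \<noteq> 0"
  shows "det (Nmat n s (scale s \<mu> a) k) \<noteq> 0"
proof
  let ?D = "block_scaling n s \<mu>"
  assume "det (Nmat n s (scale s \<mu> a) k) = 0"
  then obtain U where U: "U \<in> carrier_mat 1 (m*n)" "U \<noteq> 0\<^sub>m 1 (m*n)"
    and UN': "U * Nmat n s (scale s \<mu> a) k = 0\<^sub>m 1 (m*n)"
    by (rule det_zero_left_kernel[OF Nmat_carrier])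
  have UD: "U * ?D \<in> carrier_mat 1 (m*n)" by (rule mult_carrier_mat[OF U(1) block_scaling_carrier])
  have UF': "\<forall>t \<le> 2*s. U * Fmat n s (scale s \<mu> a) k t = 0\<^sub>m 1 n"
    using UN' mult_Nmat_eq_zero_iff[OF U(1)] by blast
  have "(U * ?D) * Fmat n s a k t = 0\<^sub>m 1 n" if "t \<le> 2*s" for t
    unfolding assoc_mult_mat[OF U(1) block_scaling_carrier Fmat_carrier]
    by (rule block_scaling_Fmat_annihilated[OF s \<mu> U(1)]) (use UF' that in auto)
  then have "(U * ?D) * Nmat n s a k = 0\<^sub>m 1 (m*n)"
    using mult_Nmat_eq_zero_iff[OF UD] by blast
  then have "U * ?D = 0\<^sub>m 1 (m*n)"
    by (intro det_nonzero_mult_right_cancel[OF Nmat_carrier det UD zero_carrier_mat]) simp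
  have "U = U * (?D * block_scaling n s (1 / \<mu>))"
    using U(1) \<mu> by (simp add: block_scaling_inverse)
  also have "\<dots> = (U * ?D) * block_scaling n s (1 / \<mu>)"
    by (rule assoc_mult_mat[OF U(1) block_scaling_carrier block_scaling_carrier, symmetric])
  also have "\<dots> = 0\<^sub>m 1 (m*n)"
    unfolding \<open>U * ?D = 0\<^sub>m 1 (m*n)\<close> by (rule left_mult_zero_mat[OF block_scaling_carrier])
  finally show False using U(2) by contradiction
qed

section \<open>The coefficient matrix\<close>

lemma Cmat_eqI:
  assumes det: "det (Nmat n s a' k) \<noteq> 0" and X: "X \<in> carrier_mat (m*n) n"
    and NX: "Nmat n s a' k * X = Fmat n s a' k m"
  shows "Cmat n s a' k = X"
  unfolding Cmat_def m_def[symmetric]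
proof (rule the_equality)
  show "X \<in> carrier_mat (m*n) n \<and> Nmat n s a' k * X = Fmat n s a' k m" using X NX by simp
  fix Y assume "Y \<in> carrier_mat (m*n) n \<and> Nmat n s a' k * Y = Fmat n s a' k m"
  then show "Y = X" using NX by (intro det_nonzero_mult_left_cancel[OF Nmat_carrier det _ X]) simp_all
qed

lemma Cmat_solves:
  assumes det: "det (Nmat n s a' k) \<noteq> 0"
  shows "Cmat n s a' k \<in> carrier_mat (m*n) n" "Nmat n s a' k * Cmat n s a' k = Fmat n s a' k m"
proof -
  obtain X where "X \<in> carrier_mat (m*n) n" "Nmat n s a' k * X = Fmat n s a' k m"
    using det_nonzero_solvable[OF Nmat_carrier det Fmat_carrier] by blast
  with Cmat_eqI[OF det] show "Cmat n s a' k \<in> carrier_mat (m*n) n" "Nmat n s a' k * Cmat n s a' k = Fmat n s a' k m"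
    by simp_all
qed

lemma cblock_eq_block_row:
  assumes "det (Nmat n s a' k) \<noteq> 0"
  shows "cblock n s a' k i = block_row n (Cmat n s a' k) i"
  using Cmat_solves(1)[OF assms] by (simp add: cblock_def block_row_def)

lemma tail_sum_Cmat:
  assumes det: "det (Nmat n s a' k) \<noteq> 0" and e: "\<And>j. e j \<in> carrier_mat n n"
    and blocks: "\<And>j. j \<le> 2*s \<Longrightarrow> e j = cblock n s a' k j" and last: "e m = - 1\<^sub>m n"
  shows "tail_sum n s a' k e 0 = 0\<^sub>m (m*n) n"
proof -
  have C: "Cmat n s a' k \<in> carrier_mat (m*n) n" "Nmat n s a' k * Cmat n s a' k = Fmat n s a' k m"
    using Cmat_solves[OF det] by auto
  have "block_stack n m e = Cmat n s a' k"
  proof (rule eq_block_rowI[OF block_stack_carrier C(1)])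
    fix b assume "b < m"
    then show "block_row n (block_stack n m e) b = block_row n (Cmat n s a' k) b"
      using block_row_block_stack[where e = e, OF e] by (simp add: blocks cblock_eq_block_row[OF det])
  qed
  then have "tail_sum n s a' k e 0 = Fmat n s a' k m + - Fmat n s a' k m"
    using C last by (simp add: tail_sum_0[where e = e, OF e])
  also have "\<dots> = 0\<^sub>m (m*n) n"
    unfolding add_uminus_minus_mat[OF Fmat_carrier Fmat_carrier] by (rule minus_r_inv_mat[OF Fmat_carrier])
  finally show ?thesis .
qed

lemma Cmat_eq_block_stack:
  assumes det: "det (Nmat n s a' k) \<noteq> 0" and e: "\<And>j. e j \<in> carrier_mat n n"
    and last: "e m = - 1\<^sub>m n" and T0: "tail_sum n s a' k e 0 = 0\<^sub>m (m*n) n"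
  shows "Cmat n s a' k = block_stack n m e"
proof (rule Cmat_eqI[OF det block_stack_carrier])
  have "Nmat n s a' k * block_stack n m e + - Fmat n s a' k m = 0\<^sub>m (m*n) n"
    using tail_sum_0[where e = e, OF e] last T0 by simp
  then show "Nmat n s a' k * block_stack n m e = Fmat n s a' k m"
    by (rule add_uminus_eq_zero_mat[OF mult_carrier_mat[OF Nmat_carrier block_stack_carrier] Fmat_carrier])
qed

lemma Cmat_scale:
  assumes s: "s \<ge> 1" and \<mu>: "\<mu> > 0" and det: "det (Nmat n s a k) \<noteq> 0"
  shows "Cmat n s (scale s \<mu> a) k = block_stack n m (\<lambda>j. \<mu> powr sdeg s j \<cdot>\<^sub>m cblock n s a k j)"
proof -
  define e where "e j = (if j \<le> 2*s then cblock n s a k j else - 1\<^sub>m n)" for j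
  define e' where "e' = (\<lambda>j. \<mu> powr sdeg s j \<cdot>\<^sub>m e j)"
  have e: "e j \<in> carrier_mat n n" for j by (simp add: e_def cblock_def)
  have e': "e' j \<in> carrier_mat n n" for j using e by (simp add: e'_def)
  have T0: "tail_sum n s a k e 0 = 0\<^sub>m (m*n) n"
    by (rule tail_sum_Cmat[OF det e]) (simp_all add: e_def m_def)
  have parity: "block_row n (tail_sum n s a k e l) i = 0\<^sub>m n n"
    if "l \<le> m" "i \<le> 2*s" "even i = even l" for l i
    using that by (intro tail_sum_parity_vanish[OF e det T0])
  have "tail_sum n s (scale s \<mu> a) k e' 0 = 0\<^sub>m (m*n) n"
  proof (rule eq_block_rowI[OF tail_sum_carrier zero_carrier_mat])
    fix b assume "b < m"
    have "block_row n (tail_sum n s (scale s \<mu> a) k e' 0) b =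
        \<mu> powr (sdeg s b + sdeg s 0) \<cdot>\<^sub>m block_row n (tail_sum n s a k e 0) b"
      unfolding e'_def using \<open>b < m\<close> by (intro tail_sum_scale_block_row[OF s e parity]) simp_all
    then show "block_row n (tail_sum n s (scale s \<mu> a) k e' 0) b = block_row n (0\<^sub>m (m*n) n) b"
      unfolding T0 using \<open>b < m\<close> by (simp add: block_row_zero)
  qed (use e' in simp_all)
  then have "Cmat n s (scale s \<mu> a) k = block_stack n m e'"
    using s \<mu> by (intro Cmat_eq_block_stack det_Nmat_scale_nonzero[OF s \<mu> det] e')
      (simp_all add: e'_def e_def sdeg_def m_def)
  also have "\<dots> = block_stack n m (\<lambda>j. \<mu> powr sdeg s j \<cdot>\<^sub>m cblock n s a k j)"
    by (rule block_stack_cong) (simp add: e'_def e_def)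
  finally show ?thesis .
qed

lemma cblock_scale:
  assumes s: "s \<ge> 1" and \<mu>: "\<mu> > 0" and det: "det (Nmat n s a k) \<noteq> 0" and i: "i \<le> 2*s"
  shows "cblock n s (scale s \<mu> a) k i = \<mu> powr sdeg s i \<cdot>\<^sub>m cblock n s a k i"
proof -
  have "cblock n s (scale s \<mu> a) k i = block_row n (Cmat n s (scale s \<mu> a) k) i"
    by (rule cblock_eq_block_row[OF det_Nmat_scale_nonzero[OF s \<mu> det]])
  also have "\<dots> = \<mu> powr sdeg s i \<cdot>\<^sub>m cblock n s a k i"
    unfolding Cmat_scale[OF s \<mu> det] using i by (intro block_row_block_stack) (simp_all add: cblock_def)
  finally show ?thesis .
qed

end

theorem mainTheorem10:
  fixes n s N k :: nat and a :: "nat \<Rightarrow> nat \<Rightarrow> real mat" and \<mu> :: real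
  assumes "n \<ge> 1" and "s \<ge> 1" and "N \<ge> 1"
    and "\<And>k' i. i \<le> 2*s \<Longrightarrow> a k' i \<in> carrier_mat n n"
    and "\<And>k' i. a (k' + N) i = a k' i"
    and "det (Nmat n s a k) \<noteq> 0"
    and "\<mu> > 0"
  shows "det (Nmat n s (scale s \<mu> a) k) \<noteq> 0 \<and>
         (\<forall>i \<le> 2*s. cblock n s (scale s \<mu> a) k i = (\<mu> powr sdeg s i) \<cdot>\<^sub>m cblock n s a k i)"
proof -
  interpret block_companion n s a "2*s+1" by unfold_locales (simp_all add: assms(4))
  show ?thesis
    using det_Nmat_scale_nonzero[OF assms(2,7,6)] cblock_scale[OF assms(2,7,6)] by blast
qed

end
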